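(* Let $\alpha:F_N\to\pi_1(\Gamma)$ be a marking, $X=\widetilde\Gamma$, let $K$ be a finite non-degenerate subtree of $X$ with terminal edges $e_1,\dots,e_n$, and let $\mu\in\mathcal S\mathrm{Curr}(F_N)$. Then for every $i=1,\dots,n$, $(K;\mu)_\alpha=\sum_{U\in P_+(q(e_i))}(K\cup U;\mu)_\alpha.$
   Context: $\mathfrak C_N$ is the set of closed subsets of $\partial F_N$ with at least two points (Vietoris topology); $\mathcal S\mathrm{Curr}(F_N)$ is the set of positive $F_N$-invariant Borel measures on $\mathfrak C_N$ finite on compact sets. A marking is an isomorphism $\alpha:F_N\to\pi_1(\Gamma)$ with $\Gamma$ finite connected without degree-one vertices; $X=\widetilde\Gamma$ with $F_N$ acting via $\alpha$, $\partial X=\partial F_N$. A finite non-degenerate subtree $K$ has at least two degree-one vertices; its terminal edges are the oriented edges whose terminal vertices have degree one in $K$. For terminal edges $e_j$, $Cyl_X(e_j)$ is the set of ends of geodesic rays starting with $e_j$, $\mathcal SCyl_\alpha(K)=\{S\in\mathfrak C_N:S\subseteq\bigcup_j Cyl_X(e_j),\ S\cap Cyl_X(e_j)\ne\emptyset\ \forall j\}$, and $(K;\mu)_\alpha=\mu(\mathcal SCyl_\alpha(K))$. For an oriented edge $e$ of $X$, $q(e)$ is the set of oriented edges $e'$ such that $e,e'$ is a reduced edge-path (i.e. $o(e')=t(e)$, $e'\ne e^{-1}$); $P_+(B)$ is the set of nonempty subsets of $B$; $K\cup U$ is the subtree obtained by adding the edges in $U$ to $K$. *)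

theory Defs
  imports "HOL-Analysis.Analysis"
begin

definition fin_graph :: "'v set \<Rightarrow> 'e set \<Rightarrow> ('e \<Rightarrow> 'v) \<Rightarrow> ('e \<Rightarrow> 'v) \<Rightarrow> ('e \<Rightarrow> 'e) \<Rightarrow> bool" where
  "fin_graph V E org trm ebar \<longleftrightarrow> finite V \<and> finite E \<and> V \<noteq> {} \<and>
     (\<forall>e\<in>E. org e \<in> V \<and> trm e \<in> V \<and> ebar e \<in> E \<and> ebar (ebar e) = e \<and> ebar e \<noteq> e \<and> org (ebar e) = trm e)"

definition graph_connected :: "'v set \<Rightarrow> 'e set \<Rightarrow> ('e \<Rightarrow> 'v) \<Rightarrow> ('e \<Rightarrow> 'v) \<Rightarrow> bool" where
  "graph_connected V E org trm \<longleftrightarrow> (\<forall>u\<in>V. \<forall>v\<in>V. (u, v) \<in> {(org e, trm e) | e. e \<in> E}\<^sup>*)"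

definition no_degree_one :: "'v set \<Rightarrow> 'e set \<Rightarrow> ('e \<Rightarrow> 'v) \<Rightarrow> bool" where
  "no_degree_one V E org \<longleftrightarrow> (\<forall>v\<in>V. card {e \<in> E. org e = v} \<noteq> 1)"

definition red_path :: "'e set \<Rightarrow> ('e \<Rightarrow> 'v) \<Rightarrow> ('e \<Rightarrow> 'v) \<Rightarrow> ('e \<Rightarrow> 'e) \<Rightarrow> 'v \<Rightarrow> 'e list \<Rightarrow> bool" where
  "red_path E org trm ebar v0 p \<longleftrightarrow> set p \<subseteq> E \<and> (p \<noteq> [] \<longrightarrow> org (hd p) = v0) \<and>
     (\<forall>i. Suc i < length p \<longrightarrow> trm (p ! i) = org (p ! Suc i) \<and> p ! Suc i \<noteq> ebar (p ! i))"

definition path_end :: "('e \<Rightarrow> 'v) \<Rightarrow> 'v \<Rightarrow> 'e list \<Rightarrow> 'v" where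
  "path_end trm v0 p = (if p = [] then v0 else trm (last p))"

definition pi1 :: "'e set \<Rightarrow> ('e \<Rightarrow> 'v) \<Rightarrow> ('e \<Rightarrow> 'v) \<Rightarrow> ('e \<Rightarrow> 'e) \<Rightarrow> 'v \<Rightarrow> 'e list set" where
  "pi1 E org trm ebar v0 = {g. red_path E org trm ebar v0 g \<and> path_end trm v0 g = v0}"

text \<open>Vertices of X are reduced edge paths from v0; an oriented edge of X is a pair (p, a)
  with p a vertex of X and a an edge of Gamma starting at the endpoint of p.\<close>

definition X_vert :: "'e set \<Rightarrow> ('e \<Rightarrow> 'v) \<Rightarrow> ('e \<Rightarrow> 'v) \<Rightarrow> ('e \<Rightarrow> 'e) \<Rightarrow> 'v \<Rightarrow> 'e list set" where
  "X_vert E org trm ebar v0 = {p. red_path E org trm ebar v0 p}"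

definition X_edge :: "'e set \<Rightarrow> ('e \<Rightarrow> 'v) \<Rightarrow> ('e \<Rightarrow> 'v) \<Rightarrow> ('e \<Rightarrow> 'e) \<Rightarrow> 'v \<Rightarrow> ('e list \<times> 'e) set" where
  "X_edge E org trm ebar v0 = {(p, a). red_path E org trm ebar v0 p \<and> a \<in> E \<and> org a = path_end trm v0 p}"

definition X_o :: "('e list \<times> 'e) \<Rightarrow> 'e list" where
  "X_o e = fst e"

definition X_t :: "('e \<Rightarrow> 'e) \<Rightarrow> ('e list \<times> 'e) \<Rightarrow> 'e list" where
  "X_t ebar e = (case e of (p, a) \<Rightarrow> if p \<noteq> [] \<and> a = ebar (last p) then butlast p else p @ [a])"

definition X_inv :: "('e \<Rightarrow> 'e) \<Rightarrow> ('e list \<times> 'e) \<Rightarrow> ('e list \<times> 'e)" where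
  "X_inv ebar e = (X_t ebar e, ebar (snd e))"

definition q_edges :: "'e set \<Rightarrow> ('e \<Rightarrow> 'v) \<Rightarrow> ('e \<Rightarrow> 'v) \<Rightarrow> ('e \<Rightarrow> 'e) \<Rightarrow> 'v \<Rightarrow> ('e list \<times> 'e) \<Rightarrow> ('e list \<times> 'e) set" where
  "q_edges E org trm ebar v0 e = {e' \<in> X_edge E org trm ebar v0. X_o e' = X_t ebar e \<and> e' \<noteq> X_inv ebar e}"

text \<open>Points of the boundary are represented by the (unique) geodesic rays from the base vertex
  (the empty path), i.e. infinite reduced edge paths in Gamma from v0.\<close>

definition rays :: "'e set \<Rightarrow> ('e \<Rightarrow> 'v) \<Rightarrow> ('e \<Rightarrow> 'v) \<Rightarrow> ('e \<Rightarrow> 'e) \<Rightarrow> 'v \<Rightarrow> (nat \<Rightarrow> 'e) set" where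
  "rays E org trm ebar v0 = {r. (\<forall>i. r i \<in> E) \<and> org (r 0) = v0 \<and>
      (\<forall>i. trm (r i) = org (r (Suc i)) \<and> r (Suc i) \<noteq> ebar (r i))}"

definition bdry_top :: "'e set \<Rightarrow> ('e \<Rightarrow> 'v) \<Rightarrow> ('e \<Rightarrow> 'v) \<Rightarrow> ('e \<Rightarrow> 'e) \<Rightarrow> 'v \<Rightarrow> (nat \<Rightarrow> 'e) topology" where
  "bdry_top E org trm ebar v0 = subtopology (product_topology (\<lambda>_. discrete_topology E) UNIV) (rays E org trm ebar v0)"

definition is_prefix :: "'e list \<Rightarrow> (nat \<Rightarrow> 'e) \<Rightarrow> bool" where
  "is_prefix p r \<longleftrightarrow> (\<forall>i < length p. r i = p ! i)"

text \<open>If e points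
  towards the root (a reverses the last edge of p), these are the ends whose root ray does not
  pass through p; otherwise they are the ends whose root ray passes through p and then a.\<close>

definition Cyl :: "('e \<Rightarrow> 'e) \<Rightarrow> (nat \<Rightarrow> 'e) set \<Rightarrow> ('e list \<times> 'e) \<Rightarrow> (nat \<Rightarrow> 'e) set" where
  "Cyl ebar R e = (case e of (p, a) \<Rightarrow>
     if p \<noteq> [] \<and> a = ebar (last p) then {r \<in> R. \<not> is_prefix p r}
     else {r \<in> R. is_prefix p r \<and> r (length p) = a})"

text \<open>Action of pi_1(Gamma, v0) on the boundary: concatenate and reduce.\<close>

definition cancel_len :: "('e \<Rightarrow> 'e) \<Rightarrow> 'e list \<Rightarrow> (nat \<Rightarrow> 'e) \<Rightarrow> nat" where
  "cancel_len ebar g r = (GREATEST k. k \<le> length g \<and> (\<forall>i<k. g ! (length g - 1 - i) = ebar (r i)))"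

definition bdry_act :: "('e \<Rightarrow> 'e) \<Rightarrow> 'e list \<Rightarrow> (nat \<Rightarrow> 'e) \<Rightarrow> (nat \<Rightarrow> 'e)" where
  "bdry_act ebar g r = (let k = cancel_len ebar g r; m = length g - k in
      (\<lambda>i. if i < m then g ! i else r (i - m + k)))"

definition CN :: "(nat \<Rightarrow> 'e) topology \<Rightarrow> (nat \<Rightarrow> 'e) set set" where
  "CN T = {S. closedin T S \<and> (\<exists>x y. x \<in> S \<and> y \<in> S \<and> x \<noteq> y)}"

definition vietoris :: "'a topology \<Rightarrow> 'a set set \<Rightarrow> 'a set topology" where
  "vietoris T C = topology_generated_by
     ({{S \<in> C. S \<subseteq> U} | U. openin T U} \<union> {{S \<in> C. S \<inter> U \<noteq> {}} | U. openin T U})"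

definition borel_of :: "'a topology \<Rightarrow> 'a measure" where
  "borel_of T = sigma (topspace T) {U. openin T U}"

text \<open>Subset currents (transported along the marking to pi_1(Gamma, v0)): positive Borel measures
  on C_N (Vietoris topology), invariant under the group action, finite on compact sets.\<close>

definition subset_current ::
  "'e set \<Rightarrow> ('e \<Rightarrow> 'v) \<Rightarrow> ('e \<Rightarrow> 'v) \<Rightarrow> ('e \<Rightarrow> 'e) \<Rightarrow> 'v \<Rightarrow> (nat \<Rightarrow> 'e) set measure \<Rightarrow> bool" where
  "subset_current E org trm ebar v0 M \<longleftrightarrow>
     (let T = bdry_top E org trm ebar v0; C = CN T; VT = vietoris T C in
       sets M = sets (borel_of VT) \<and> space M = topspace VT \<and>
       (\<forall>g \<in> pi1 E org trm ebar v0. \<forall>A \<in> sets M.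
           emeasure M ((\<lambda>S. bdry_act ebar g ` S) ` A) = emeasure M A) \<and>
       (\<forall>K. compactin VT K \<longrightarrow> emeasure M K < \<infinity>))"

text \<open>A finite subtree is given by its (finite, nonempty, inversion-closed, connected) set of
  oriented edges of X.\<close>

definition sub_verts :: "('e \<Rightarrow> 'e) \<Rightarrow> ('e list \<times> 'e) set \<Rightarrow> 'e list set" where
  "sub_verts ebar K = X_o ` K"

definition finite_subtree ::
  "'e set \<Rightarrow> ('e \<Rightarrow> 'v) \<Rightarrow> ('e \<Rightarrow> 'v) \<Rightarrow> ('e \<Rightarrow> 'e) \<Rightarrow> 'v \<Rightarrow> ('e list \<times> 'e) set \<Rightarrow> bool" where
  "finite_subtree E org trm ebar v0 K \<longleftrightarrow> finite K \<and> K \<noteq> {} \<and> K \<subseteq> X_edge E org trm ebar v0 \<and>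
     (\<forall>e\<in>K. X_inv ebar e \<in> K) \<and>
     (\<forall>u \<in> sub_verts ebar K. \<forall>v \<in> sub_verts ebar K. (u, v) \<in> {(X_o e, X_t ebar e) | e. e \<in> K}\<^sup>*)"

definition sub_deg :: "('e list \<times> 'e) set \<Rightarrow> 'e list \<Rightarrow> nat" where
  "sub_deg K v = card {e \<in> K. X_o e = v}"

definition non_degenerate :: "('e \<Rightarrow> 'e) \<Rightarrow> ('e list \<times> 'e) set \<Rightarrow> bool" where
  "non_degenerate ebar K \<longleftrightarrow> card {v \<in> sub_verts ebar K. sub_deg K v = 1} \<ge> 2"

definition terminal_edges :: "('e \<Rightarrow> 'e) \<Rightarrow> ('e list \<times> 'e) set \<Rightarrow> ('e list \<times> 'e) set" where
  "terminal_edges ebar K = {e \<in> K. sub_deg K (X_t ebar e) = 1}"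

text \<open>K \<union> U: the subtree obtained by adding the (geometric) edges of U.\<close>

definition add_edges :: "('e \<Rightarrow> 'e) \<Rightarrow> ('e list \<times> 'e) set \<Rightarrow> ('e list \<times> 'e) set \<Rightarrow> ('e list \<times> 'e) set" where
  "add_edges ebar K U = K \<union> U \<union> X_inv ebar ` U"

definition SCyl :: "'e set \<Rightarrow> ('e \<Rightarrow> 'v) \<Rightarrow> ('e \<Rightarrow> 'v) \<Rightarrow> ('e \<Rightarrow> 'e) \<Rightarrow> 'v \<Rightarrow> ('e list \<times> 'e) set \<Rightarrow> (nat \<Rightarrow> 'e) set set" where
  "SCyl E org trm ebar v0 K = {S \<in> CN (bdry_top E org trm ebar v0).
      S \<subseteq> (\<Union>e \<in> terminal_edges ebar K. Cyl ebar (rays E org trm ebar v0) e) \<and>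
      (\<forall>e \<in> terminal_edges ebar K. S \<inter> Cyl ebar (rays E org trm ebar v0) e \<noteq> {})}"

end

theory Submission
  imports Defs "HOL-Library.Sublist"
begin

text \<open>Every end of X beyond the terminal edge e_i lies beyond exactly one edge of q(e_i), and the
  cylinders of distinct terminal edges of K are disjoint. Hence every S in SCyl(K) lies in
  SCyl(K \<union> U) for exactly one U, namely the set of edges of q(e_i) whose cylinders S meets:
  the terminal edges of K \<union> U are those of K with e_i replaced by the edges of U. So SCyl(K) is
  a finite disjoint union of the sets SCyl(K \<union> U), which are open in the Vietoris topology, and
  the identity is finite additivity of \<mu>.\<close>

definition toward_base :: "('e \<Rightarrow> 'e) \<Rightarrow> 'e list \<times> 'e \<Rightarrow> bool" where
  "toward_base ebar e \<longleftrightarrow> fst e \<noteq> [] \<and> snd e = ebar (last (fst e))"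

definition far_vertex :: "('e \<Rightarrow> 'e) \<Rightarrow> 'e list \<times> 'e \<Rightarrow> 'e list" where
  "far_vertex ebar e = (if toward_base ebar e then fst e else fst e @ [snd e])"

text \<open>The vertex v lies in the half-tree of X into which e points: a vertex is beyond an edge
  pointing away from the base iff its geodesic from the base passes through the far vertex.\<close>

definition beyond :: "('e \<Rightarrow> 'e) \<Rightarrow> 'e list \<times> 'e \<Rightarrow> 'e list \<Rightarrow> bool" where
  "beyond ebar e v \<longleftrightarrow>
     (if toward_base ebar e then \<not> prefix (far_vertex ebar e) v else prefix (far_vertex ebar e) v)"

definition ray_beyond :: "('e \<Rightarrow> 'e) \<Rightarrow> 'e list \<times> 'e \<Rightarrow> (nat \<Rightarrow> 'e) \<Rightarrow> bool" where
  "ray_beyond ebar e r \<longleftrightarrow>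
     (if toward_base ebar e then \<not> is_prefix (far_vertex ebar e) r else is_prefix (far_vertex ebar e) r)"

lemma X_t_eq: "X_t ebar e = (if toward_base ebar e then butlast (fst e) else fst e @ [snd e])"
  by (cases e) (simp add: X_t_def toward_base_def)

lemma far_vertex_eq: "far_vertex ebar e = (if toward_base ebar e then X_o e else X_t ebar e)"
  by (simp add: far_vertex_def X_o_def X_t_eq)

lemma is_prefix_Nil [simp]: "is_prefix [] r"
  by (simp add: is_prefix_def)

lemma is_prefix_singleton [simp]: "is_prefix [a] r \<longleftrightarrow> r 0 = a"
  by (simp add: is_prefix_def)

lemma is_prefix_snoc: "is_prefix (p @ [a]) r \<longleftrightarrow> is_prefix p r \<and> r (length p) = a"
  unfolding is_prefix_def by (auto simp: nth_append less_Suc_eq)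

lemma is_prefix_prefix: "prefix p q \<Longrightarrow> is_prefix q r \<Longrightarrow> is_prefix p r"
  unfolding is_prefix_def prefix_def by (auto simp: nth_append)

lemma is_prefix_imp_prefix:
  assumes "is_prefix p r" "is_prefix q r" "length p \<le> length q"
  shows "prefix p q"
proof -
  have "take (length p) q = p"
    using assms by (intro nth_equalityI) (auto simp: is_prefix_def)
  then show ?thesis
    by (metis prefix_def append_take_drop_id)
qed

lemma Cyl_eq_ray_beyond: "Cyl ebar R e = {r \<in> R. ray_beyond ebar e r}"
  by (cases e) (auto simp: Cyl_def ray_beyond_def far_vertex_def toward_base_def is_prefix_snoc)

lemma X_edge_eq_if_same_ends: "X_o e = X_o f \<Longrightarrow> X_t ebar e = X_t ebar f \<Longrightarrow> e = f"
  by (cases e; cases f)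
    (auto simp: X_o_def X_t_eq toward_base_def split: if_splits dest: arg_cong[where f = length])

lemma not_beyond_X_o: "\<not> beyond ebar e (X_o e)"
  by (cases e) (auto simp: beyond_def far_vertex_def X_o_def dest: prefix_length_le)

lemma beyond_X_t: "beyond ebar e (X_t ebar e)"
proof (cases "toward_base ebar e")
  case True
  then have "length (butlast (fst e)) < length (fst e)"
    by (simp add: toward_base_def)
  then have "\<not> prefix (fst e) (butlast (fst e))"
    by (meson prefix_length_le not_le)
  with True show ?thesis
    by (simp add: beyond_def far_vertex_def X_t_eq)
qed (simp add: beyond_def far_vertex_def X_t_eq)

lemma prefix_snoc_X_t_iff:
  assumes "(q, b) \<noteq> (w, c)" "(q, b) \<noteq> (w @ [c], ebar c)"
  shows "prefix (w @ [c]) (X_t ebar (q, b)) \<longleftrightarrow> prefix (w @ [c]) q"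
proof (cases "q \<noteq> [] \<and> b = ebar (last q)")
  case True
  then obtain q' d where "q = q' @ [d]" "b = ebar d"
    by (metis append_butlast_last_id)
  with assms show ?thesis
    by (auto simp: X_t_def)
qed (use assms in \<open>auto simp: X_t_def\<close>)

lemma ray_beyond_same_origin:
  assumes "fst e = fst f" "ray_beyond ebar e r" "ray_beyond ebar f r"
  shows "e = f"
  using assms by (cases e; cases f)
    (auto simp: ray_beyond_def far_vertex_def toward_base_def is_prefix_snoc split: if_splits)

lemma ray_beyond_exclusive:
  assumes "\<not> beyond ebar e (X_o f)" "\<not> beyond ebar e (X_t ebar f)"
    and "\<not> beyond ebar f (X_o e)" "\<not> beyond ebar f (X_t ebar e)"
    and "ray_beyond ebar e r" "ray_beyond ebar f r"
  shows "e = f"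
proof -
  note defs = beyond_def ray_beyond_def far_vertex_eq
  consider "toward_base ebar e" "toward_base ebar f" | "toward_base ebar e" "\<not> toward_base ebar f"
    | "\<not> toward_base ebar e" "toward_base ebar f" | "\<not> toward_base ebar e" "\<not> toward_base ebar f"
    by blast
  then show ?thesis
  proof cases
    case 1
    with assms(1,3) have "far_vertex ebar e = far_vertex ebar f"
      by (simp add: defs prefix_order.antisym)
    with 1 show ?thesis
      by (simp add: far_vertex_def toward_base_def prod_eq_iff)
  next
    case 2
    with assms(2,5,6) show ?thesis
      by (simp add: defs) (metis is_prefix_prefix)
  next
    case 3
    with assms(4,5,6) show ?thesis
      by (simp add: defs) (metis is_prefix_prefix)
  next
    case 4
    with assms(5,6) have "prefix (far_vertex ebar e) (far_vertex ebar f) \<or>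
        prefix (far_vertex ebar f) (far_vertex ebar e)"
      by (metis ray_beyond_def is_prefix_imp_prefix nle_le)
    with 4 assms(2,4) show ?thesis
      by (auto simp: defs)
  qed
qed

lemma red_path_snoc:
  assumes "red_path E org trm ebar v0 p" "a \<in> E" "org a = path_end trm v0 p"
    and "p \<noteq> [] \<Longrightarrow> a \<noteq> ebar (last p)"
  shows "red_path E org trm ebar v0 (p @ [a])"
  unfolding red_path_def
proof (intro conjI allI impI)
  show "set (p @ [a]) \<subseteq> E" "org (hd (p @ [a])) = v0"
    using assms(1-3) by (cases p; auto simp: red_path_def path_end_def)+
  fix i assume i: "Suc i < length (p @ [a])"
  have "trm ((p @ [a]) ! i) = org ((p @ [a]) ! Suc i) \<and> (p @ [a]) ! Suc i \<noteq> ebar ((p @ [a]) ! i)"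
  proof (cases "Suc i < length p")
    case True
    then show ?thesis using assms(1) by (simp add: red_path_def nth_append)
  next
    case False
    with i have "Suc i = length p" "p \<noteq> []" by auto
    moreover from this have "p ! i = last p" by (metis diff_Suc_1 last_conv_nth)
    ultimately show ?thesis using assms(3,4) by (simp add: nth_append path_end_def)
  qed
  then show "trm ((p @ [a]) ! i) = org ((p @ [a]) ! Suc i)"
    "(p @ [a]) ! Suc i \<noteq> ebar ((p @ [a]) ! i)" by auto
qed

lemma red_path_snocD:
  assumes "red_path E org trm ebar v0 (w @ [c])"
  shows "red_path E org trm ebar v0 w" "c \<in> E" "org c = path_end trm v0 w"
    and "w \<noteq> [] \<Longrightarrow> c \<noteq> ebar (last w)"
proof -
  have step: "trm ((w @ [c]) ! i) = org ((w @ [c]) ! Suc i) \<and> (w @ [c]) ! Suc i \<noteq> ebar ((w @ [c]) ! i)"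
    if "Suc i < length (w @ [c])" for i
    using assms that by (simp add: red_path_def)
  show "red_path E org trm ebar v0 w"
    unfolding red_path_def
  proof (intro conjI allI impI)
    show "set w \<subseteq> E" "w \<noteq> [] \<Longrightarrow> org (hd w) = v0"
      using assms by (simp_all add: red_path_def)
    fix i assume "Suc i < length w"
    then show "trm (w ! i) = org (w ! Suc i)" "w ! Suc i \<noteq> ebar (w ! i)"
      using step[of i] by (simp_all add: nth_append)
  qed
  show "c \<in> E" using assms by (simp add: red_path_def)
  have "org c = trm (last w) \<and> c \<noteq> ebar (last w)" if "w \<noteq> []"
  proof -
    obtain i where "Suc i = length w" using \<open>w \<noteq> []\<close> by (metis length_greater_0_conv Suc_pred)
    moreover from this have "w ! i = last w" by (metis \<open>w \<noteq> []\<close> diff_Suc_1 last_conv_nth)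
    ultimately show ?thesis using step[of i] by (simp add: nth_append)
  qed
  then show "org c = path_end trm v0 w" "w \<noteq> [] \<Longrightarrow> c \<noteq> ebar (last w)"
    using assms by (auto simp: red_path_def path_end_def)
qed

locale universal_cover =
  fixes E :: "'e set" and org trm :: "'e \<Rightarrow> 'v" and ebar :: "'e \<Rightarrow> 'e" and v0 :: 'v
  assumes finite_E: "finite E" and ebar_in_E: "\<And>a. a \<in> E \<Longrightarrow> ebar a \<in> E"
    and ebar_ebar: "\<And>a. a \<in> E \<Longrightarrow> ebar (ebar a) = a"
    and org_ebar: "\<And>a. a \<in> E \<Longrightarrow> org (ebar a) = trm a"
begin

abbreviation "XE \<equiv> X_edge E org trm ebar v0"
abbreviation "RP \<equiv> red_path E org trm ebar v0"
abbreviation "RR \<equiv> rays E org trm ebar v0"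
abbreviation "qe \<equiv> q_edges E org trm ebar v0"
abbreviation "Cy \<equiv> Cyl ebar RR"

lemma X_edge_iff: "(p, a) \<in> XE \<longleftrightarrow> RP p \<and> a \<in> E \<and> org a = path_end trm v0 p"
  by (simp add: X_edge_def)

lemma X_inv_away:
  assumes "(p, a) \<in> XE" "\<not> toward_base ebar (p, a)"
  shows "X_inv ebar (p, a) = (p @ [a], ebar a)" "(p @ [a], ebar a) \<in> XE"
    and "toward_base ebar (p @ [a], ebar a)"
proof -
  from assms have "RP (p @ [a])" "a \<in> E"
    by (auto intro: red_path_snoc simp: X_edge_iff toward_base_def)
  then show "(p @ [a], ebar a) \<in> XE"
    by (simp add: X_edge_iff ebar_in_E org_ebar path_end_def)
qed (use assms in \<open>auto simp: X_inv_def X_t_eq toward_base_def\<close>)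

lemma X_inv_toward:
  assumes "(w @ [c], ebar c) \<in> XE"
  shows "X_inv ebar (w @ [c], ebar c) = (w, c)" "(w, c) \<in> XE"
    and "\<not> toward_base ebar (w, c)"
proof -
  from assms have "RP w" "c \<in> E" "org c = path_end trm v0 w" "w \<noteq> [] \<Longrightarrow> c \<noteq> ebar (last w)"
    by (auto dest: red_path_snocD simp: X_edge_iff)
  then show "X_inv ebar (w @ [c], ebar c) = (w, c)" "(w, c) \<in> XE" "\<not> toward_base ebar (w, c)"
    by (auto simp: X_inv_def X_t_def ebar_ebar X_edge_iff toward_base_def)
qed

lemma X_inv_cases:
  assumes "e \<in> XE"
  obtains p a where "e = (p, a)" "\<not> toward_base ebar e" "X_inv ebar e = (p @ [a], ebar a)"
      "X_inv ebar e \<in> XE" "toward_base ebar (X_inv ebar e)"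
  | w c where "e = (w @ [c], ebar c)" "toward_base ebar e" "X_inv ebar e = (w, c)"
      "X_inv ebar e \<in> XE" "\<not> toward_base ebar (X_inv ebar e)"
proof (cases e)
  case (Pair p a)
  show thesis
  proof (cases "toward_base ebar e")
    case True
    then obtain w c where "p = w @ [c]" "a = ebar c"
      using Pair by (metis toward_base_def append_butlast_last_id fst_conv snd_conv)
    with that(2) True assms Pair X_inv_toward show thesis by simp
  next
    case False
    with that(1) assms Pair X_inv_away show thesis by simp
  qed
qed

lemma X_inv_in_X_edge: "e \<in> XE \<Longrightarrow> X_inv ebar e \<in> XE"
  by (cases rule: X_inv_cases) auto

lemma X_inv_X_inv: "e \<in> XE \<Longrightarrow> X_inv ebar (X_inv ebar e) = e"
  by (cases rule: X_inv_cases) (auto simp: X_inv_def X_t_eq toward_base_def ebar_ebar X_edge_iff)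

lemma far_vertex_X_inv: "e \<in> XE \<Longrightarrow> far_vertex ebar (X_inv ebar e) = far_vertex ebar e"
  by (cases rule: X_inv_cases) (auto simp: far_vertex_def)

lemma toward_base_X_inv: "e \<in> XE \<Longrightarrow> toward_base ebar (X_inv ebar e) \<longleftrightarrow> \<not> toward_base ebar e"
  by (cases rule: X_inv_cases) auto

lemma X_o_X_inv [simp]: "X_o (X_inv ebar e) = X_t ebar e"
  by (simp add: X_o_def X_inv_def)

lemma X_t_X_inv: "e \<in> XE \<Longrightarrow> X_t ebar (X_inv ebar e) = X_o e"
  by (metis X_o_X_inv X_inv_X_inv)

lemma ray_beyond_X_inv: "e \<in> XE \<Longrightarrow> ray_beyond ebar (X_inv ebar e) r \<longleftrightarrow> \<not> ray_beyond ebar e r"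
  by (simp add: ray_beyond_def far_vertex_X_inv toward_base_X_inv)

lemma beyond_X_o_iff_X_t:
  assumes "e \<in> XE" "f \<noteq> e" "f \<noteq> X_inv ebar e"
  shows "beyond ebar e (X_o f) \<longleftrightarrow> beyond ebar e (X_t ebar f)"
  using assms(1)
proof (cases rule: X_inv_cases)
  case (1 p a)
  with assms prefix_snoc_X_t_iff[of "fst f" "snd f" p a ebar] show ?thesis
    by (simp add: beyond_def far_vertex_def X_o_def)
next
  case (2 w c)
  with assms prefix_snoc_X_t_iff[of "fst f" "snd f" w c ebar] show ?thesis
    by (simp add: beyond_def far_vertex_def X_o_def)
qed

lemma ray_X_edge:
  assumes "r \<in> RR" "is_prefix w r" "RP w"
  shows "(w, r (length w)) \<in> XE"
proof -
  have "org (r (length w)) = path_end trm v0 w"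
  proof (cases w rule: rev_cases)
    case Nil
    with assms(1) show ?thesis by (simp add: rays_def path_end_def)
  next
    case (snoc u c)
    with assms(1,2) have "trm (last w) = trm (r (length u))"
      by (simp add: is_prefix_def)
    with assms(1) snoc show ?thesis by (simp add: rays_def path_end_def)
  qed
  with assms show ?thesis by (simp add: X_edge_iff rays_def)
qed

text \<open>The edge is the next edge of the ray after v if the ray passes through v, and otherwise the
  edge from v towards the base; it is unique by ray_beyond_same_origin.\<close>

lemma ray_beyond_edge_from:
  assumes "RP v" "r \<in> RR"
  obtains f where "f \<in> XE" "X_o f = v" "ray_beyond ebar f r"
proof (cases "is_prefix v r")
  case True
  have "r (length v) \<noteq> ebar (last v)" if "v \<noteq> []"
  proof -
    obtain u c where v: "v = u @ [c]"
      using \<open>v \<noteq> []\<close> by (cases v rule: rev_cases) auto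
    with True have "r (length u) = c"
      by (simp add: is_prefix_snoc)
    moreover have "r (Suc (length u)) \<noteq> ebar (r (length u))"
      using assms(2) by (simp add: rays_def)
    ultimately show ?thesis
      by (simp add: v)
  qed
  then have "\<not> toward_base ebar (v, r (length v))"
    by (auto simp: toward_base_def)
  with True that[of "(v, r (length v))"] ray_X_edge[OF assms(2) True assms(1)] show thesis
    by (simp add: X_o_def ray_beyond_def far_vertex_def is_prefix_snoc)
next
  case False
  then obtain u c where v: "v = u @ [c]" by (cases v rule: rev_cases) auto
  with assms(1) have "(v, ebar c) \<in> XE"
    by (simp add: X_edge_iff red_path_def ebar_in_E org_ebar path_end_def)
  with False that[of "(v, ebar c)"] show thesis
    by (simp add: X_o_def ray_beyond_def far_vertex_def toward_base_def v)
qed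

lemma ray_beyond_iff_q_edges:
  assumes "e \<in> XE" "r \<in> RR"
  shows "ray_beyond ebar e r \<longleftrightarrow> (\<exists>e' \<in> qe e. ray_beyond ebar e' r)"
proof
  have "RP (X_t ebar e)"
    using X_inv_in_X_edge[OF assms(1)] by (metis X_o_X_inv X_edge_iff X_o_def prod.collapse)
  then obtain f where f: "f \<in> XE" "X_o f = X_t ebar e" "ray_beyond ebar f r"
    using ray_beyond_edge_from assms(2) by blast
  assume "ray_beyond ebar e r"
  then have "f \<noteq> X_inv ebar e"
    using f(3) ray_beyond_X_inv[OF assms(1)] by auto
  with f have "f \<in> qe e"
    by (simp add: q_edges_def)
  with f(3) show "\<exists>e' \<in> qe e. ray_beyond ebar e' r"
    by blast
next
  assume "\<exists>e' \<in> qe e. ray_beyond ebar e' r"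
  then obtain e' where e': "e' \<in> qe e" "ray_beyond ebar e' r" by blast
  show "ray_beyond ebar e r"
  proof (rule ccontr)
    assume "\<not> ray_beyond ebar e r"
    then have "ray_beyond ebar (X_inv ebar e) r"
      using ray_beyond_X_inv[OF assms(1)] by simp
    with e' have "e' = X_inv ebar e"
      by (intro ray_beyond_same_origin) (auto simp: q_edges_def X_o_def X_inv_def)
    with e'(1) show False by (simp add: q_edges_def)
  qed
qed

lemma Cyl_eq_Union_q_edges: "e \<in> XE \<Longrightarrow> Cy e = (\<Union>e' \<in> qe e. Cy e')"
  unfolding Cyl_eq_ray_beyond using ray_beyond_iff_q_edges by blast

lemma Cyl_q_edges_disjoint: "e' \<in> qe e \<Longrightarrow> e'' \<in> qe e \<Longrightarrow> e' \<noteq> e'' \<Longrightarrow> Cy e' \<inter> Cy e'' = {}"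
  using ray_beyond_same_origin[of e' e'' ebar] by (auto simp: Cyl_eq_ray_beyond q_edges_def X_o_def)

lemma finite_q_edges: "finite (qe e)"
proof -
  have "qe e \<subseteq> Pair (X_t ebar e) ` E"
    by (auto simp: q_edges_def X_edge_def X_o_def)
  then show ?thesis
    using finite_E finite_subset by blast
qed

end

section \<open>Openness of subset cylinders\<close>

lemma openin_in_sets_borel_of:
  assumes "openin T A"
  shows "A \<in> sets (borel_of T)"
proof -
  have "{U. openin T U} \<subseteq> Pow (topspace T)"
    using openin_subset by blast
  moreover have "A \<in> sigma_sets (topspace T) {U. openin T U}"
    using assms by (blast intro: sigma_sets.Basic)
  ultimately show ?thesis
    by (simp add: borel_of_def sets_measure_of)
qed

context universal_cover
begin

abbreviation "PT \<equiv> product_topology (\<lambda>_. discrete_topology E) (UNIV :: nat set)"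
abbreviation "BT \<equiv> bdry_top E org trm ebar v0"

lemma openin_coordinate: "openin PT {r \<in> topspace PT. r i \<in> A}"
proof -
  have "continuous_map PT (discrete_topology E) (\<lambda>r. r i)"
    by (rule continuous_map_product_projection) simp
  then have "openin PT {r \<in> topspace PT. r i \<in> A \<inter> E}"
    by (rule openin_continuous_map_preimage) simp
  moreover have "{r \<in> topspace PT. r i \<in> A \<inter> E} = {r \<in> topspace PT. r i \<in> A}"
    by auto
  ultimately show ?thesis
    by simp
qed

lemma openin_is_prefix: "openin PT {r \<in> topspace PT. is_prefix w r}"
proof -
  have "{r \<in> topspace PT. is_prefix w r} = (\<Inter>i \<in> {..<length w}. {r \<in> topspace PT. r i \<in> {w ! i}}) \<inter> topspace PT"
    by (auto simp: is_prefix_def)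
  also have "openin PT \<dots>"
    by (rule openin_INT) (rule finite_lessThan, rule openin_coordinate)
  finally show ?thesis .
qed

lemma openin_not_is_prefix: "openin PT {r \<in> topspace PT. \<not> is_prefix w r}"
proof -
  have "{r \<in> topspace PT. \<not> is_prefix w r} = (\<Union>i \<in> {..<length w}. {r \<in> topspace PT. r i \<in> - {w ! i}})"
    by (auto simp: is_prefix_def)
  also have "openin PT \<dots>"
  proof (rule openin_Union)
    fix S assume "S \<in> (\<lambda>i. {r \<in> topspace PT. r i \<in> - {w ! i}}) ` {..<length w}"
    then show "openin PT S"
      using openin_coordinate by blast
  qed
  finally show ?thesis .
qed

lemma openin_Cyl: "openin BT (Cy e)"
proof -
  have "RR \<subseteq> topspace PT"
    by (auto simp: rays_def PiE_def extensional_def)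
  then have "Cy e = RR \<inter> {r \<in> topspace PT. ray_beyond ebar e r}"
    unfolding Cyl_eq_ray_beyond by blast
  moreover have "openin PT {r \<in> topspace PT. ray_beyond ebar e r}"
  proof (cases "toward_base ebar e")
    case True
    then have "{r \<in> topspace PT. ray_beyond ebar e r} = {r \<in> topspace PT. \<not> is_prefix (far_vertex ebar e) r}"
      by (simp add: ray_beyond_def)
    then show ?thesis using openin_not_is_prefix by simp
  next
    case False
    then have "{r \<in> topspace PT. ray_beyond ebar e r} = {r \<in> topspace PT. is_prefix (far_vertex ebar e) r}"
      by (simp add: ray_beyond_def)
    then show ?thesis using openin_is_prefix by simp
  qed
  ultimately show ?thesis
    by (simp add: bdry_top_def openin_subtopology_Int2)
qed

lemma openin_SCyl:
  assumes "finite (terminal_edges ebar L)" "terminal_edges ebar L \<noteq> {}"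
  shows "openin (vietoris BT (CN BT)) (SCyl E org trm ebar v0 L)"
proof -
  let ?T = "terminal_edges ebar L"
  define W where "W = (\<Union>e \<in> ?T. Cy e)"
  have "openin BT W"
    unfolding W_def using openin_Cyl by blast
  have SCyl_eq: "SCyl E org trm ebar v0 L =
      \<Inter> (insert {S \<in> CN BT. S \<subseteq> W} ((\<lambda>e. {S \<in> CN BT. S \<inter> Cy e \<noteq> {}}) ` ?T))"
    using assms(2) by (auto simp: SCyl_def W_def)
  have "openin (vietoris BT (CN BT)) X"
    if "X \<in> insert {S \<in> CN BT. S \<subseteq> W} ((\<lambda>e. {S \<in> CN BT. S \<inter> Cy e \<noteq> {}}) ` ?T)" for X
    using that \<open>openin BT W\<close> openin_Cyl unfolding vietoris_def
    by (auto intro!: topology_generated_by_Basis)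
  then show ?thesis
    unfolding SCyl_eq using assms(1) by (intro openin_Inter) auto
qed

end

section \<open>Terminal edges of a finite subtree\<close>

locale cover_subtree = universal_cover E org trm ebar v0
  for E :: "'e set" and org trm :: "'e \<Rightarrow> 'v" and ebar :: "'e \<Rightarrow> 'e" and v0 :: 'v +
  fixes K :: "('e list \<times> 'e) set"
  assumes finite_K: "finite K" and K_X_edge: "K \<subseteq> XE"
    and X_inv_K: "\<And>e. e \<in> K \<Longrightarrow> X_inv ebar e \<in> K"
    and K_connected: "\<And>u v. u \<in> X_o ` K \<Longrightarrow> v \<in> X_o ` K \<Longrightarrow>
      (u, v) \<in> {(X_o e, X_t ebar e) | e. e \<in> K}\<^sup>*"
begin

abbreviation "TT \<equiv> terminal_edges ebar K"

lemma terminal_in_K: "ei \<in> TT \<Longrightarrow> ei \<in> K"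
  by (simp add: terminal_edges_def)

lemma terminal_in_X_edge: "ei \<in> TT \<Longrightarrow> ei \<in> XE"
  using terminal_in_K K_X_edge by blast

lemma X_t_in_vertices: "f \<in> K \<Longrightarrow> X_t ebar f \<in> X_o ` K"
  by (metis X_inv_K X_o_X_inv image_eqI)

lemma vertices_invariant:
  assumes "u \<in> X_o ` K" "v \<in> X_o ` K" "P u"
    and "\<And>f. f \<in> K \<Longrightarrow> P (X_o f) \<Longrightarrow> P (X_t ebar f)"
  shows "P v"
  using K_connected[OF assms(1,2)] assms(3)
  by (induction rule: rtrancl_induct) (use assms(4) in blast)+

lemma edges_from_terminal_vertex:
  assumes "ei \<in> TT"
  shows "{g \<in> K. X_o g = X_t ebar ei} = {X_inv ebar ei}"
proof -
  have "card {g \<in> K. X_o g = X_t ebar ei} = 1"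
    using assms by (simp add: terminal_edges_def sub_deg_def)
  moreover have "X_inv ebar ei \<in> {g \<in> K. X_o g = X_t ebar ei}"
    using X_inv_K terminal_in_K[OF assms] by simp
  ultimately show ?thesis
    by (metis card_1_singletonE singletonD)
qed

lemma terminal_eq_if_same_X_t:
  assumes "ei \<in> TT" "ej \<in> TT" "X_t ebar ej = X_t ebar ei"
  shows "ej = ei"
proof -
  have "X_inv ebar ej \<in> {g \<in> K. X_o g = X_t ebar ei}"
    using assms X_inv_K terminal_in_K by simp
  then have "X_inv ebar ej = X_inv ebar ei"
    using edges_from_terminal_vertex[OF assms(1)] by blast
  then show ?thesis
    using assms(1,2) terminal_in_K K_X_edge by (metis X_inv_X_inv subsetD)
qed

lemma not_beyond_terminal:
  assumes "ei \<in> TT" "w \<in> X_o ` K" "w \<noteq> X_t ebar ei"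
  shows "\<not> beyond ebar ei w"
proof -
  have ei: "ei \<in> K" "ei \<in> XE"
    using assms(1) terminal_in_K terminal_in_X_edge by blast+
  have "beyond ebar ei w \<longrightarrow> w = X_t ebar ei"
  proof (rule vertices_invariant[where u = "X_o ei" and P = "\<lambda>v. beyond ebar ei v \<longrightarrow> v = X_t ebar ei"])
    fix f assume f: "f \<in> K" "beyond ebar ei (X_o f) \<longrightarrow> X_o f = X_t ebar ei"
    consider "f = ei" | "f = X_inv ebar ei" | "f \<noteq> ei" "f \<noteq> X_inv ebar ei"
      by blast
    then show "beyond ebar ei (X_t ebar f) \<longrightarrow> X_t ebar f = X_t ebar ei"
    proof cases
      case 2
      then show ?thesis using X_t_X_inv[OF ei(2)] not_beyond_X_o by metis
    next
      case 3
      with edges_from_terminal_vertex[OF assms(1)] f have "X_o f \<noteq> X_t ebar ei"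
        by blast
      with 3 f(2) show ?thesis
        using beyond_X_o_iff_X_t[OF ei(2)] by blast
    qed simp
  qed (use assms(2) ei not_beyond_X_o in blast)+
  with assms(3) show ?thesis by blast
qed

lemma Cyl_terminal_disjoint:
  assumes "ei \<in> TT" "ej \<in> TT" "ei \<noteq> ej"
  shows "Cy ei \<inter> Cy ej = {}"
proof -
  have K: "ei \<in> K" "ej \<in> K" and X: "ei \<in> XE" "ej \<in> XE"
    using assms(1,2) terminal_in_K terminal_in_X_edge by blast+
  have False if r: "ray_beyond ebar ei r" "ray_beyond ebar ej r" for r
  proof (cases "ej = X_inv ebar ei")
    case True
    with r show False using ray_beyond_X_inv[OF X(1)] by simp
  next
    case False
    have t: "X_t ebar ej \<noteq> X_t ebar ei"
      using terminal_eq_if_same_X_t assms by blast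
    have "X_o ej \<noteq> X_t ebar ei"
      using edges_from_terminal_vertex[OF assms(1)] K(2) False by blast
    moreover have "X_o ei \<noteq> X_t ebar ej"
    proof
      assume "X_o ei = X_t ebar ej"
      then have "ei = X_inv ebar ej"
        using edges_from_terminal_vertex[OF assms(2)] K(1) by blast
      with False X_inv_X_inv[OF X(2)] show False by simp
    qed
    ultimately have "ei = ej"
      using ray_beyond_exclusive[OF _ _ _ _ r] not_beyond_terminal[OF assms(1)]
        not_beyond_terminal[OF assms(2)] K t X_t_in_vertices by (metis image_eqI)
    with assms(3) show False ..
  qed
  then show ?thesis
    by (auto simp: Cyl_eq_ray_beyond)
qed

lemma q_edges_terminal_outside:
  assumes "ei \<in> TT" "e' \<in> qe ei"
  shows "e' \<notin> K" "X_inv ebar e' \<notin> K" "X_t ebar e' \<notin> X_o ` K"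
proof -
  have e': "e' \<in> XE" "X_o e' = X_t ebar ei" "e' \<noteq> X_inv ebar ei"
    using assms(2) by (auto simp: q_edges_def)
  show e'_notin: "e' \<notin> K"
    using edges_from_terminal_vertex[OF assms(1)] e' by blast
  then show "X_inv ebar e' \<notin> K"
    using X_inv_K X_inv_X_inv[OF e'(1)] by metis
  have t: "X_t ebar ei \<in> X_o ` K"
    using X_t_in_vertices terminal_in_K[OF assms(1)] by blast
  have "\<not> beyond ebar e' w" if "w \<in> X_o ` K" for w
  proof (rule vertices_invariant[OF t that])
    show "\<not> beyond ebar e' (X_t ebar ei)"
      using not_beyond_X_o e'(2) by metis
    fix f assume "f \<in> K" "\<not> beyond ebar e' (X_o f)"
    moreover from \<open>f \<in> K\<close> have "f \<noteq> e'" "f \<noteq> X_inv ebar e'"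
      using e'_notin \<open>X_inv ebar e' \<notin> K\<close> by auto
    ultimately show "\<not> beyond ebar e' (X_t ebar f)"
      using beyond_X_o_iff_X_t[OF e'(1)] by blast
  qed
  then show "X_t ebar e' \<notin> X_o ` K"
    using beyond_X_t by blast
qed

context
  fixes ei U
  assumes terminal: "ei \<in> TT" and U_q_edges: "U \<subseteq> qe ei"
begin

lemma X_o_added: "e' \<in> U \<Longrightarrow> X_o e' = X_t ebar ei"
  using U_q_edges by (auto simp: q_edges_def)

lemma X_t_added_notin: "e' \<in> U \<Longrightarrow> X_t ebar e' \<notin> X_o ` K"
  using q_edges_terminal_outside(3)[OF terminal] U_q_edges by blast

lemma finite_add_edges: "finite (add_edges ebar K U)"
  using finite_K finite_subset[OF U_q_edges finite_q_edges] by (simp add: add_edges_def)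

lemma sub_deg_add_edges_old_vertex:
  assumes "v \<in> X_o ` K" "v \<noteq> X_t ebar ei"
  shows "sub_deg (add_edges ebar K U) v = sub_deg K v"
proof -
  have "X_o g \<noteq> v" if "g \<in> U \<union> X_inv ebar ` U" for g
  proof -
    from that consider "g \<in> U" | e'' where "e'' \<in> U" "g = X_inv ebar e''"
      by blast
    then show ?thesis
    proof cases
      case 1
      with assms(2) X_o_added show ?thesis by auto
    next
      case 2
      with assms(1) X_t_added_notin[OF 2(1)] show ?thesis by (metis X_o_X_inv)
    qed
  qed
  then have "{g \<in> add_edges ebar K U. X_o g = v} = {g \<in> K. X_o g = v}"
    by (auto simp: add_edges_def)
  then show ?thesis
    by (simp add: sub_deg_def)
qed

lemma sub_deg_add_edges_branch_vertex:
  assumes "U \<noteq> {}"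
  shows "sub_deg (add_edges ebar K U) (X_t ebar ei) \<noteq> 1"
proof -
  obtain e' where e': "e' \<in> U"
    using assms by blast
  have "{X_inv ebar ei, e'} \<subseteq> {g \<in> add_edges ebar K U. X_o g = X_t ebar ei}"
    using X_inv_K[OF terminal_in_K[OF terminal]] e' X_o_added by (auto simp: add_edges_def)
  moreover have "e' \<noteq> X_inv ebar ei"
    using e' U_q_edges by (auto simp: q_edges_def)
  ultimately have "2 \<le> card {g \<in> add_edges ebar K U. X_o g = X_t ebar ei}"
    using card_mono[OF _ \<open>{X_inv ebar ei, e'} \<subseteq> _\<close>] finite_add_edges by simp
  then show ?thesis
    by (simp add: sub_deg_def)
qed

lemma sub_deg_add_edges_new_vertex:
  assumes e': "e' \<in> U"
  shows "sub_deg (add_edges ebar K U) (X_t ebar e') = 1"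
proof -
  have "g = X_inv ebar e'" if g: "g \<in> add_edges ebar K U" "X_o g = X_t ebar e'" for g
  proof -
    have "g \<notin> K"
      using g(2) X_t_added_notin[OF e'] by (metis image_eqI)
    moreover have "g \<notin> U"
    proof
      assume "g \<in> U"
      with g(2) X_o_added have "X_t ebar e' = X_t ebar ei"
        by simp
      with X_t_added_notin[OF e'] X_t_in_vertices[OF terminal_in_K[OF terminal]] show False
        by simp
    qed
    ultimately obtain e'' where e'': "e'' \<in> U" "g = X_inv ebar e''"
      using g(1) by (auto simp: add_edges_def)
    with g(2) e' X_o_added have "e'' = e'"
      by (intro X_edge_eq_if_same_ends) auto
    with e'' show ?thesis by simp
  qed
  then have "{g \<in> add_edges ebar K U. X_o g = X_t ebar e'} = {X_inv ebar e'}"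
    using e' by (auto simp: add_edges_def)
  then show ?thesis
    by (simp add: sub_deg_def)
qed

lemma terminal_edges_add_edges:
  assumes "U \<noteq> {}"
  shows "terminal_edges ebar (add_edges ebar K U) = (TT - {ei}) \<union> U"
proof (intro equalityI subsetI)
  fix f assume f: "f \<in> terminal_edges ebar (add_edges ebar K U)"
  then have deg: "sub_deg (add_edges ebar K U) (X_t ebar f) = 1"
    by (simp add: terminal_edges_def)
  then have t: "X_t ebar f \<noteq> X_t ebar ei"
    using sub_deg_add_edges_branch_vertex[OF assms] by auto
  from f consider "f \<in> K" | "f \<in> U" | e'' where "e'' \<in> U" "f = X_inv ebar e''"
    by (auto simp: terminal_edges_def add_edges_def)
  then show "f \<in> (TT - {ei}) \<union> U"
  proof cases
    case 1
    with deg t have "sub_deg K (X_t ebar f) = 1" "f \<noteq> ei"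
      using sub_deg_add_edges_old_vertex[OF X_t_in_vertices[OF 1] t] by auto
    with 1 show ?thesis
      by (simp add: terminal_edges_def)
  next
    case 3
    then have "e'' \<in> XE"
      using U_q_edges by (auto simp: q_edges_def)
    with 3 t have False
      using X_o_added[OF 3(1)] by (simp add: X_t_X_inv)
    then show ?thesis ..
  qed simp
next
  fix f assume f: "f \<in> (TT - {ei}) \<union> U"
  show "f \<in> terminal_edges ebar (add_edges ebar K U)"
  proof (cases "f \<in> U")
    case True
    then have "f \<in> add_edges ebar K U"
      by (simp add: add_edges_def)
    with sub_deg_add_edges_new_vertex[OF True] show ?thesis
      unfolding terminal_edges_def by blast
  next
    case False
    with f have "f \<in> TT" "f \<noteq> ei" by auto
    then have fK: "f \<in> K" "sub_deg K (X_t ebar f) = 1"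
      by (simp_all add: terminal_edges_def)
    have "X_t ebar f \<noteq> X_t ebar ei"
      using terminal_eq_if_same_X_t terminal \<open>f \<in> TT\<close> \<open>f \<noteq> ei\<close> by blast
    then have "sub_deg (add_edges ebar K U) (X_t ebar f) = 1"
      using sub_deg_add_edges_old_vertex[OF X_t_in_vertices[OF fK(1)]] fK(2) by simp
    moreover have "f \<in> add_edges ebar K U"
      using fK(1) by (simp add: add_edges_def)
    ultimately show ?thesis
      unfolding terminal_edges_def by blast
  qed
qed

end

section \<open>Decomposition of SCyl(K) at a terminal edge\<close>

abbreviation "SC \<equiv> SCyl E org trm ebar v0"

context
  fixes ei
  assumes terminal: "ei \<in> TT"
begin

lemma Cyl_q_edges_subset: "e' \<in> qe ei \<Longrightarrow> Cy e' \<subseteq> Cy ei"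
  using Cyl_eq_Union_q_edges[OF terminal_in_X_edge[OF terminal]] by blast

lemma SCyl_add_edges_determines:
  assumes "U \<subseteq> qe ei" "U \<noteq> {}" "S \<in> SC (add_edges ebar K U)"
  shows "U = {e' \<in> qe ei. S \<inter> Cy e' \<noteq> {}}"
proof -
  have T: "terminal_edges ebar (add_edges ebar K U) = (TT - {ei}) \<union> U"
    by (rule terminal_edges_add_edges[OF terminal assms(1,2)])
  from assms(3) have cover: "S \<subseteq> (\<Union>e \<in> (TT - {ei}) \<union> U. Cy e)"
    and meet: "\<forall>e \<in> (TT - {ei}) \<union> U. S \<inter> Cy e \<noteq> {}"
    by (simp_all add: SCyl_def T)
  have "e' \<in> U" if e': "e' \<in> qe ei" "x \<in> S" "x \<in> Cy e'" for e' x
  proof -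
    obtain f where f: "f \<in> (TT - {ei}) \<union> U" "x \<in> Cy f"
      using cover e'(2) by blast
    have "x \<in> Cy ei"
      using Cyl_q_edges_subset e'(1,3) by blast
    with f have "f \<in> U"
      using Cyl_terminal_disjoint[OF terminal] by blast
    with f(2) e' assms(1) show ?thesis
      using Cyl_q_edges_disjoint by blast
  qed
  with meet assms(1) show ?thesis
    by blast
qed

lemma SCyl_add_edges_subset:
  assumes "U \<subseteq> qe ei" "U \<noteq> {}"
  shows "SC (add_edges ebar K U) \<subseteq> SC K"
proof
  fix S assume "S \<in> SC (add_edges ebar K U)"
  then have S: "S \<in> CN BT" "S \<subseteq> (\<Union>e \<in> (TT - {ei}) \<union> U. Cy e)"
    "\<forall>e \<in> (TT - {ei}) \<union> U. S \<inter> Cy e \<noteq> {}"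
    by (simp_all add: SCyl_def terminal_edges_add_edges[OF terminal assms])
  have "S \<subseteq> (\<Union>e \<in> TT. Cy e)"
    using S(2) Cyl_q_edges_subset assms(1) terminal by blast
  moreover have "S \<inter> Cy e \<noteq> {}" if "e \<in> TT" for e
  proof (cases "e = ei")
    case True
    obtain e' where "e' \<in> U"
      using assms(2) by blast
    with S(3) True show ?thesis
      using Cyl_q_edges_subset assms(1) by blast
  qed (use S(3) that in blast)
  ultimately show "S \<in> SC K"
    using S(1) by (simp add: SCyl_def)
qed

lemma SCyl_in_add_edges_meeting:
  assumes "S \<in> SC K"
  shows "{e' \<in> qe ei. S \<inter> Cy e' \<noteq> {}} \<noteq> {}"
    and "S \<in> SC (add_edges ebar K {e' \<in> qe ei. S \<inter> Cy e' \<noteq> {}})"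
proof -
  let ?U = "{e' \<in> qe ei. S \<inter> Cy e' \<noteq> {}}"
  from assms have S: "S \<in> CN BT" "S \<subseteq> (\<Union>e \<in> TT. Cy e)" "\<forall>e \<in> TT. S \<inter> Cy e \<noteq> {}"
    by (simp_all add: SCyl_def)
  have Cy_ei: "Cy ei = (\<Union>e' \<in> qe ei. Cy e')"
    by (rule Cyl_eq_Union_q_edges[OF terminal_in_X_edge[OF terminal]])
  obtain x where "x \<in> S" "x \<in> Cy ei"
    using S(3) terminal by blast
  with Cy_ei show U: "?U \<noteq> {}"
    by blast
  have T: "terminal_edges ebar (add_edges ebar K ?U) = (TT - {ei}) \<union> ?U"
    by (rule terminal_edges_add_edges[OF terminal _ U]) blast
  have "S \<subseteq> (\<Union>e \<in> (TT - {ei}) \<union> ?U. Cy e)"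
  proof
    fix y assume "y \<in> S"
    then obtain e where "e \<in> TT" "y \<in> Cy e"
      using S(2) by blast
    show "y \<in> (\<Union>e \<in> (TT - {ei}) \<union> ?U. Cy e)"
    proof (cases "e = ei")
      case True
      with \<open>y \<in> Cy e\<close> Cy_ei obtain e' where "e' \<in> qe ei" "y \<in> Cy e'"
        by blast
      with \<open>y \<in> S\<close> show ?thesis by blast
    qed (use \<open>e \<in> TT\<close> \<open>y \<in> Cy e\<close> in blast)
  qed
  moreover have "\<forall>e \<in> (TT - {ei}) \<union> ?U. S \<inter> Cy e \<noteq> {}"
    using S(3) by auto
  ultimately show "S \<in> SC (add_edges ebar K ?U)"
    using S(1) unfolding SCyl_def T by blast
qed

lemma SCyl_eq_Union_add_edges:
  "SC K = (\<Union>U \<in> {U. U \<subseteq> qe ei \<and> U \<noteq> {}}. SC (add_edges ebar K U))"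
proof (intro equalityI subsetI)
  fix S assume S: "S \<in> SC K"
  let ?U = "{e' \<in> qe ei. S \<inter> Cy e' \<noteq> {}}"
  have "?U \<in> {U. U \<subseteq> qe ei \<and> U \<noteq> {}}"
    using SCyl_in_add_edges_meeting(1)[OF S] by blast
  then show "S \<in> (\<Union>U \<in> {U. U \<subseteq> qe ei \<and> U \<noteq> {}}. SC (add_edges ebar K U))"
    by (rule UN_I) (rule SCyl_in_add_edges_meeting(2)[OF S])
next
  fix S assume "S \<in> (\<Union>U \<in> {U. U \<subseteq> qe ei \<and> U \<noteq> {}}. SC (add_edges ebar K U))"
  then obtain U where "U \<subseteq> qe ei" "U \<noteq> {}" "S \<in> SC (add_edges ebar K U)"
    by blast
  then show "S \<in> SC K"
    using SCyl_add_edges_subset by blast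
qed

lemma disjoint_family_on_SCyl_add_edges:
  "disjoint_family_on (\<lambda>U. SC (add_edges ebar K U)) {U. U \<subseteq> qe ei \<and> U \<noteq> {}}"
  unfolding disjoint_family_on_def
proof (intro ballI impI equals0I)
  fix U U' S
  assume "U \<in> {U. U \<subseteq> qe ei \<and> U \<noteq> {}}" "U' \<in> {U. U \<subseteq> qe ei \<and> U \<noteq> {}}" "U \<noteq> U'"
    and "S \<in> SC (add_edges ebar K U) \<inter> SC (add_edges ebar K U')"
  then show False
    using SCyl_add_edges_determines[of U S] SCyl_add_edges_determines[of U' S] by auto
qed

lemma openin_SCyl_add_edges:
  assumes "U \<subseteq> qe ei" "U \<noteq> {}"
  shows "openin (vietoris BT (CN BT)) (SC (add_edges ebar K U))"
proof (rule openin_SCyl)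
  have "finite TT"
    using finite_K by (simp add: terminal_edges_def)
  moreover have "finite U"
    using assms(1) finite_q_edges finite_subset by blast
  ultimately show "finite (terminal_edges ebar (add_edges ebar K U))"
    by (simp add: terminal_edges_add_edges[OF terminal assms])
  show "terminal_edges ebar (add_edges ebar K U) \<noteq> {}"
    using assms(2) by (simp add: terminal_edges_add_edges[OF terminal assms])
qed

end

end

theorem proposition3p11:
  fixes V :: "'v set" and E :: "'e set" and org trm :: "'e \<Rightarrow> 'v" and ebar :: "'e \<Rightarrow> 'e"
    and v0 :: 'v and K :: "('e list \<times> 'e) set" and M :: "(nat \<Rightarrow> 'e) set measure"
    and ei :: "'e list \<times> 'e"
  assumes "fin_graph V E org trm ebar" and "graph_connected V E org trm" and "no_degree_one V E org"
    and "v0 \<in> V"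
    and "finite_subtree E org trm ebar v0 K" and "non_degenerate ebar K"
    and "subset_current E org trm ebar v0 M"
    and "ei \<in> terminal_edges ebar K"
  shows "emeasure M (SCyl E org trm ebar v0 K) =
    (\<Sum>U \<in> {U. U \<subseteq> q_edges E org trm ebar v0 ei \<and> U \<noteq> {}}.
        emeasure M (SCyl E org trm ebar v0 (add_edges ebar K U)))"
proof -
  interpret cover_subtree E org trm ebar v0 K
    using assms(1,5) by unfold_locales (auto simp: fin_graph_def finite_subtree_def sub_verts_def)
  let ?P = "{U. U \<subseteq> qe ei \<and> U \<noteq> {}}"
  have "sets M = sets (borel_of (vietoris BT (CN BT)))"
    using assms(7) by (simp add: subset_current_def Let_def)
  then have "(\<lambda>U. SC (add_edges ebar K U)) ` ?P \<subseteq> sets M"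
    using openin_SCyl_add_edges[OF assms(8)] openin_in_sets_borel_of by auto
  moreover have "finite ?P"
    using finite_q_edges[of ei] by (auto intro: finite_subset[of _ "Pow (qe ei)"])
  ultimately have "(\<Sum>U \<in> ?P. emeasure M (SC (add_edges ebar K U))) =
      emeasure M (\<Union>U \<in> ?P. SC (add_edges ebar K U))"
    using disjoint_family_on_SCyl_add_edges[OF assms(8)] by (intro sum_emeasure)
  then show ?thesis
    using SCyl_eq_Union_add_edges[OF assms(8)] by simp
qed

end
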